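(* For any directed hypergraph with a directed hypergraph cellular sheaf (any charge $q\in\mathbb R$, stalk dimension $d$) such that every $D_u$ is positive definite, the normalized Directed Sheaf Hypergraph Laplacian $L^{\vec{\mathcal F}}_N$ is positive semidefinite.
   Context: A directed hypergraph is $\mathcal H=(V,E)$ with $n=|V|$, $m=|E|$, each hyperedge $e\in E$ a nonempty subset of $V$ partitioned into disjoint sets $T(e)$ (tail) and $H(e)$ (head) with $e=T(e)\cup H(e)$; $\delta_e:=|e|$. A directed hypergraph cellular sheaf with charge $q\in\mathbb R$ and stalk dimension $d$ consists of: for each $e\in E$, $u\in V$, the scalar $\mathcal S^{(q)}_{u\trianglelefteq e}=1$ if $u\in H(e)$, $=e^{-2\pi\mathbf i q}$ if $u\in T(e)$, $=0$ otherwise; for each incidence $u\in e$ a real matrix $\mathcal F_{u\trianglelefteq e}\in\mathbb R^{d\times d}$ and $\vec{\mathcal F}_{u\trianglelefteq e}:=\mathcal S^{(q)}_{u\trianglelefteq e}\mathcal F_{u\trianglelefteq e}$. Let $B^{(q)}\in\mathbb C^{md\times nd}$ have $d\times d$ block $(e,u)$ equal to $\vec{\mathcal F}_{u\trianglelefteq e}$ if $u\in e$ and $0$ otherwise; $D_E=\mathrm{diag}(\delta_1I_d,\dots,\delta_mI_d)$; $D_u:=\sum_{e\ni u}\mathcal F_{u\trianglelefteq e}^\top\mathcal F_{u\trianglelefteq e}$; $D_V=\mathrm{diag}(D_1,\dots,D_n)$. $L^{\vec{\mathcal F}}:=D_V-(B^{(q)})^\dagger D_E^{-1}B^{(q)}$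 and $L^{\vec{\mathcal F}}_N:=D_V^{-1/2}L^{\vec{\mathcal F}}D_V^{-1/2}$. *)

theory Defs
  imports "HOL-Analysis.Analysis"
begin

text \<open>Directed hypergraph on vertex set {..<n} with hyperedges indexed by {..<m};
  hyperedge e has tail T e and head H e.\<close>

definition dir_hypergraph :: "nat \<Rightarrow> nat \<Rightarrow> (nat \<Rightarrow> nat set) \<Rightarrow> (nat \<Rightarrow> nat set) \<Rightarrow> bool" where
  "dir_hypergraph n m T H \<longleftrightarrow>
     (\<forall>e<m. T e \<union> H e \<noteq> {} \<and> T e \<inter> H e = {} \<and> T e \<union> H e \<subseteq> {..<n})"

definition hedge :: "(nat \<Rightarrow> nat set) \<Rightarrow> (nat \<Rightarrow> nat set) \<Rightarrow> nat \<Rightarrow> nat set" where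
  "hedge T H e = T e \<union> H e"

definition hdelta :: "(nat \<Rightarrow> nat set) \<Rightarrow> (nat \<Rightarrow> nat set) \<Rightarrow> nat \<Rightarrow> nat" where
  "hdelta T H e = card (hedge T H e)"

definition charge_scalar :: "real \<Rightarrow> (nat \<Rightarrow> nat set) \<Rightarrow> (nat \<Rightarrow> nat set) \<Rightarrow> nat \<Rightarrow> nat \<Rightarrow> complex" where
  "charge_scalar q T H u e =
     (if u \<in> H e then 1
      else if u \<in> T e then exp (- (2 * complex_of_real pi * \<i> * complex_of_real q))
      else 0)"

definition cmat :: "real^'d^'d \<Rightarrow> complex^'d^'d" where
  "cmat A = (\<chi> i j. complex_of_real (A $ i $ j))"

definition cadj :: "complex^'d^'d \<Rightarrow> complex^'d^'d" where
  "cadj A = (\<chi> i j. cnj (A $ j $ i))"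

definition dir_restr ::
  "real \<Rightarrow> (nat \<Rightarrow> nat set) \<Rightarrow> (nat \<Rightarrow> nat set) \<Rightarrow> (nat \<Rightarrow> nat \<Rightarrow> real^'d^'d) \<Rightarrow> nat \<Rightarrow> nat \<Rightarrow> complex^'d^'d" where
  "dir_restr q T H F u e =
     (if u \<in> hedge T H e then (\<chi> i j. charge_scalar q T H u e * cmat (F u e) $ i $ j) else 0)"

definition deg_mat :: "nat \<Rightarrow> (nat \<Rightarrow> nat set) \<Rightarrow> (nat \<Rightarrow> nat set) \<Rightarrow> (nat \<Rightarrow> nat \<Rightarrow> real^'d^'d) \<Rightarrow> nat \<Rightarrow> real^'d^'d" where
  "deg_mat m T H F u = (\<Sum>e\<in>{e. e < m \<and> u \<in> hedge T H e}. transpose (F u e) ** F u e)"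

definition real_pos_def :: "real^'d^'d \<Rightarrow> bool" where
  "real_pos_def A \<longleftrightarrow> transpose A = A \<and> (\<forall>x. x \<noteq> 0 \<longrightarrow> x \<bullet> (A *v x) > 0)"

definition mat_inv_sqrt :: "real^'d^'d \<Rightarrow> real^'d^'d" where
  "mat_inv_sqrt A = (THE S. real_pos_def S \<and> S ** S = matrix_inv A)"

text \<open>Sheaf Laplacian L^F as an n x n block matrix with d x d complex blocks:
  L = D_V - B^dagger D_E^{-1} B.\<close>
definition sheaf_laplacian ::
  "nat \<Rightarrow> real \<Rightarrow> (nat \<Rightarrow> nat set) \<Rightarrow> (nat \<Rightarrow> nat set) \<Rightarrow> (nat \<Rightarrow> nat \<Rightarrow> real^'d^'d) \<Rightarrow> nat \<Rightarrow> nat \<Rightarrow> complex^'d^'d" where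
  "sheaf_laplacian m q T H F u v =
     (if u = v then cmat (deg_mat m T H F u) else 0)
     - (\<Sum>e<m. (\<chi> i j. (1 / of_nat (hdelta T H e)) * (cadj (dir_restr q T H F u e) ** dir_restr q T H F v e) $ i $ j))"

definition norm_sheaf_laplacian ::
  "nat \<Rightarrow> real \<Rightarrow> (nat \<Rightarrow> nat set) \<Rightarrow> (nat \<Rightarrow> nat set) \<Rightarrow> (nat \<Rightarrow> nat \<Rightarrow> real^'d^'d) \<Rightarrow> nat \<Rightarrow> nat \<Rightarrow> complex^'d^'d" where
  "norm_sheaf_laplacian m q T H F u v =
     cmat (mat_inv_sqrt (deg_mat m T H F u)) ** sheaf_laplacian m q T H F u v
       ** cmat (mat_inv_sqrt (deg_mat m T H F v))"

text \<open>Positive semidefiniteness of an n x n block matrix with d x d complex blocks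
  (i.e. of the nd x nd complex matrix): Hermitian and x^* M x >= 0 for all x.\<close>
definition block_psd :: "nat \<Rightarrow> (nat \<Rightarrow> nat \<Rightarrow> complex^'d^'d) \<Rightarrow> bool" where
  "block_psd n M \<longleftrightarrow>
     (\<forall>u<n. \<forall>v<n. M u v = cadj (M v u)) \<and>
     (\<forall>x :: nat \<Rightarrow> complex^'d.
        let Q = (\<Sum>u<n. \<Sum>v<n. \<Sum>i\<in>UNIV. cnj (x u $ i) * ((M u v *v x v) $ i))
        in Im Q = 0 \<and> Re Q \<ge> 0)"

end

(*
  Expanding the quadratic form of the sheaf Laplacian hyperedge by hyperedge gives
    y* L y = sum_e ( sum_{u in e} |F_{u<|e} y_u|^2 - |sum_{u in e} S_{u<|e} F_{u<|e} y_u|^2 / delta_e ),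
  and every summand is nonnegative by the triangle and Cauchy-Schwarz inequalities, because the
  charge scalars S_{u<|e} have modulus 1.  The normalized form at x is the unnormalized one at
  y_u = D_u^(-1/2) x_u, which needs D_u^(-1/2) to be symmetric: the defining description of
  D_u^(-1/2) determines it uniquely, by the spectral theorem for real symmetric matrices and the
  uniqueness of positive definite square roots.
*)
theory Submission
  imports Defs
begin

lemma symmetric_matrix_inner_commute:
  fixes A :: "real^'n^'n"
  assumes "transpose A = A"
  shows "x \<bullet> (A *v y) = (A *v x) \<bullet> y"
  by (metis assms dot_lmul_matrix transpose_matrix_vector)

lemma nonneg_quadratic_imp_linear_coeff_zero:
  fixes a b :: real
  assumes nonneg: "\<And>t. 0 \<le> 2 * t * a + t\<^sup>2 * b"
  shows "a = 0"
proof (rule ccontr)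
  assume "a \<noteq> 0"
  define c where "c = \<bar>b\<bar> + 1"
  have "c > 0" "b \<le> c" unfolding c_def by auto
  have "0 \<le> c\<^sup>2 * (2 * (- a / c) * a + (- a / c)\<^sup>2 * b)"
    using nonneg[of "- a / c"] by simp
  also have "\<dots> = a\<^sup>2 * (b - 2 * c)"
    using \<open>c > 0\<close> by (simp add: field_simps power2_eq_square)
  also have "\<dots> < 0"
    using \<open>a \<noteq> 0\<close> \<open>b \<le> c\<close> \<open>c > 0\<close> by (simp add: mult_pos_neg)
  finally show False by simp
qed

lemma rayleigh_quotient_attains_max:
  fixes A :: "real^'n^'n"
  assumes W: "subspace W" and nontrivial: "W \<noteq> {0}"
  shows "\<exists>v\<in>W. norm v = 1 \<and> (\<forall>u\<in>W. u \<bullet> (A *v u) \<le> (v \<bullet> (A *v v)) * (u \<bullet> u))"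
proof -
  define K where "K = W \<inter> sphere 0 1"
  define f where "f x = x \<bullet> (A *v x)" for x
  have "compact K"
    unfolding K_def using closed_Int_compact[OF closed_subspace[OF W] compact_sphere] .
  obtain w where "w \<in> W" "w \<noteq> 0" using nontrivial W subspace_0 by blast
  then have "w /\<^sub>R norm w \<in> K" unfolding K_def using W by (simp add: subspace_scale)
  moreover have "continuous_on K f" unfolding f_def
    by (intro continuous_intros linear_continuous_on matrix_vector_mul_linear)
  ultimately obtain v where v: "v \<in> K" and v_max: "\<And>y. y \<in> K \<Longrightarrow> f y \<le> f v"
    using continuous_attains_sup[OF \<open>compact K\<close>] by blast
  have "f u \<le> f v * (u \<bullet> u)" if "u \<in> W" for u
  proof (cases "u = 0")
    case False
    then have "u /\<^sub>R norm u \<in> K" unfolding K_def using \<open>u \<in> W\<close> W by (simp add: subspace_scale)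
    moreover have "f (u /\<^sub>R norm u) = f u / (norm u)\<^sup>2"
      unfolding f_def by (simp add: matrix_vector_mult_scaleR power2_eq_square field_simps)
    ultimately have "f u / (norm u)\<^sup>2 \<le> f v" using v_max by metis
    then show ?thesis using False by (simp add: field_simps power2_norm_eq_inner)
  qed (simp add: f_def)
  then show ?thesis using v unfolding K_def f_def by auto
qed

lemma symmetric_matrix_eigenvector_in_subspace:
  fixes A :: "real^'n^'n"
  assumes sym: "transpose A = A" and W: "subspace W" and invariant: "\<And>x. x \<in> W \<Longrightarrow> A *v x \<in> W"
    and nontrivial: "W \<noteq> {0}"
  shows "\<exists>v\<in>W. norm v = 1 \<and> A *v v = (v \<bullet> (A *v v)) *\<^sub>R v"
proof -
  obtain v where "v \<in> W" "norm v = 1" and v_max: "\<And>u. u \<in> W \<Longrightarrow> u \<bullet> (A *v u) \<le> (v \<bullet> (A *v v)) * (u \<bullet> u)"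
    using rayleigh_quotient_attains_max[OF W nontrivial] by blast
  define l where "l = v \<bullet> (A *v v)"
  \<comment> \<open>The form of \<open>g = l I - A\<close> is nonnegative on \<open>W\<close> and vanishes at \<open>v\<close>, so \<open>v\<close> lies in its kernel.\<close>
  define g where "g x = l *\<^sub>R x - A *v x" for x
  have g_nonneg: "0 \<le> u \<bullet> g u" if "u \<in> W" for u
    using v_max[OF that] unfolding g_def l_def by (simp add: inner_diff_right)
  have "v \<bullet> g v = 0"
    using \<open>norm v = 1\<close> unfolding g_def l_def by (simp add: inner_diff_right norm_eq_1)
  define z where "z = g v"
  have "z \<in> W" unfolding z_def g_def using W \<open>v \<in> W\<close> invariant by (simp add: subspace_diff subspace_scale)
  have "0 \<le> 2 * t * (z \<bullet> z) + t\<^sup>2 * (z \<bullet> g z)" for t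
  proof -
    have "v + t *\<^sub>R z \<in> W" using W \<open>v \<in> W\<close> \<open>z \<in> W\<close> by (simp add: subspace_add subspace_scale)
    then have "0 \<le> (v + t *\<^sub>R z) \<bullet> g (v + t *\<^sub>R z)" by (rule g_nonneg)
    also have "\<dots> = v \<bullet> g v + t * (v \<bullet> g z) + t * (z \<bullet> g v) + t\<^sup>2 * (z \<bullet> g z)"
      unfolding g_def by (simp add: inner_add_left inner_add_right inner_diff_right
          matrix_vector_right_distrib matrix_vector_mult_scaleR power2_eq_square algebra_simps)
    also have "\<dots> = 2 * t * (z \<bullet> z) + t\<^sup>2 * (z \<bullet> g z)"
      using \<open>v \<bullet> g v = 0\<close> symmetric_matrix_inner_commute[OF sym, of v z]
      unfolding z_def g_def by (simp add: inner_diff_right inner_diff_left inner_commute)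
    finally show ?thesis .
  qed
  then have "z \<bullet> z = 0" by (rule nonneg_quadratic_imp_linear_coeff_zero)
  then have "A *v v = l *\<^sub>R v" unfolding z_def g_def by simp
  then show ?thesis using \<open>v \<in> W\<close> \<open>norm v = 1\<close> unfolding l_def by blast
qed

definition orthonormal_basis_of :: "'a::real_inner set \<Rightarrow> 'a set \<Rightarrow> bool" where
  "orthonormal_basis_of B W \<longleftrightarrow> finite B \<and> B \<subseteq> W \<and> (\<forall>b\<in>B. norm b = 1) \<and> pairwise orthogonal B \<and>
     (\<forall>x\<in>W. x = (\<Sum>b\<in>B. (b \<bullet> x) *\<^sub>R b))"

lemma orthonormal_basis_of_finite: "orthonormal_basis_of B W \<Longrightarrow> finite B"
  unfolding orthonormal_basis_of_def by blast

lemma orthonormal_basis_of_expansion: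
  "orthonormal_basis_of B W \<Longrightarrow> x \<in> W \<Longrightarrow> x = (\<Sum>b\<in>B. (b \<bullet> x) *\<^sub>R b)"
  unfolding orthonormal_basis_of_def by blast

lemma orthonormal_basis_of_insert:
  assumes W: "subspace W" and "v \<in> W" "norm v = 1"
    and B: "orthonormal_basis_of B {x \<in> W. v \<bullet> x = 0}"
  shows "orthonormal_basis_of (insert v B) W"
proof -
  have "v \<bullet> v = 1" using \<open>norm v = 1\<close> by (simp add: norm_eq_1)
  have orth: "orthogonal v b" "orthogonal b v" if "b \<in> B" for b
    using B that unfolding orthonormal_basis_of_def orthogonal_def by (auto simp: inner_commute)
  then have "v \<notin> B" using \<open>v \<bullet> v = 1\<close> unfolding orthogonal_def by force
  have "x = (\<Sum>b\<in>insert v B. (b \<bullet> x) *\<^sub>R b)" if "x \<in> W" for x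
  proof -
    define x' where "x' = x - (v \<bullet> x) *\<^sub>R v"
    have "x' \<in> W" "v \<bullet> x' = 0"
      unfolding x'_def using that \<open>v \<in> W\<close> W \<open>v \<bullet> v = 1\<close>
      by (auto simp: subspace_diff subspace_scale inner_diff_right)
    then have "x' = (\<Sum>b\<in>B. (b \<bullet> x') *\<^sub>R b)" using B unfolding orthonormal_basis_of_def by blast
    also have "\<dots> = (\<Sum>b\<in>B. (b \<bullet> x) *\<^sub>R b)"
      using orth unfolding x'_def orthogonal_def by (intro sum.cong) (auto simp: inner_diff_right)
    finally show ?thesis
      using B \<open>v \<notin> B\<close> unfolding x'_def orthonormal_basis_of_def by (simp add: algebra_simps)
  qed
  then show ?thesis
    using B \<open>v \<in> W\<close> \<open>norm v = 1\<close> orth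
    unfolding orthonormal_basis_of_def pairwise_insert by auto
qed

theorem symmetric_matrix_orthonormal_eigenbasis:
  fixes A :: "real^'n^'n"
  assumes sym: "transpose A = A" and "subspace W" and "\<And>x. x \<in> W \<Longrightarrow> A *v x \<in> W"
  shows "\<exists>B. orthonormal_basis_of B W \<and> (\<forall>b\<in>B. A *v b = (b \<bullet> (A *v b)) *\<^sub>R b)"
  using assms(2,3)
proof (induction "dim W" arbitrary: W rule: less_induct)
  case less
  show ?case
  proof (cases "W = {0}")
    case True
    then show ?thesis by (intro exI[of _ "{}"]) (simp add: orthonormal_basis_of_def)
  next
    case False
    then obtain v where "v \<in> W" "norm v = 1" and v_eigen: "A *v v = (v \<bullet> (A *v v)) *\<^sub>R v"
      using symmetric_matrix_eigenvector_in_subspace[OF sym less.prems] by blast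
    define W' where "W' = {x \<in> W. v \<bullet> x = 0}"
    have "subspace W'" unfolding W'_def using \<open>subspace W\<close>
      by (auto simp: subspace_def inner_add_right)
    moreover have "A *v x \<in> W'" if "x \<in> W'" for x
    proof -
      have "v \<bullet> (A *v x) = (v \<bullet> (A *v v)) * (v \<bullet> x)"
        by (subst symmetric_matrix_inner_commute[OF sym], subst v_eigen) simp
      then show ?thesis using that less.prems(2) unfolding W'_def by auto
    qed
    moreover have "dim W' < dim W"
    proof (rule dim_psubset)
      have "v \<notin> W'" using \<open>norm v = 1\<close> unfolding W'_def by (auto simp: norm_eq_1)
      then have "W' \<subset> W" unfolding W'_def using \<open>v \<in> W\<close> by blast
      then show "span W' \<subset> span W" using \<open>subspace W'\<close> \<open>subspace W\<close> by (metis span_eq_iff)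
    qed
    ultimately obtain B where "orthonormal_basis_of B W'" "\<forall>b\<in>B. A *v b = (b \<bullet> (A *v b)) *\<^sub>R b"
      using less.hyps by blast
    then show ?thesis
      using orthonormal_basis_of_insert[OF \<open>subspace W\<close> \<open>v \<in> W\<close> \<open>norm v = 1\<close>] v_eigen
      unfolding W'_def by blast
  qed
qed

definition spectral_matrix :: "(real^'n) set \<Rightarrow> (real^'n \<Rightarrow> real) \<Rightarrow> real^'n^'n" where
  "spectral_matrix B g = (\<Sum>b\<in>B. g b *\<^sub>R (\<chi> i j. b $ i * b $ j))"

lemma spectral_matrix_mult_vec:
  assumes "finite B"
  shows "spectral_matrix B g *v x = (\<Sum>b\<in>B. (g b * (b \<bullet> x)) *\<^sub>R b)"
proof -
  have "(spectral_matrix B g *v x) $ i = (\<Sum>b\<in>B. g b * (b \<bullet> x) * b $ i)" for i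
  proof -
    have "(spectral_matrix B g *v x) $ i = (\<Sum>j\<in>UNIV. (\<Sum>b\<in>B. g b * (b $ i * b $ j)) * x $ j)"
      using assms by (simp add: spectral_matrix_def matrix_vector_mult_def)
    also have "\<dots> = (\<Sum>b\<in>B. \<Sum>j\<in>UNIV. g b * (b $ i * b $ j) * x $ j)"
      by (simp add: sum_distrib_right sum.swap[of _ UNIV B])
    also have "\<dots> = (\<Sum>b\<in>B. g b * (b \<bullet> x) * b $ i)"
      by (simp add: inner_vec_def sum_distrib_left mult_ac)
    finally show ?thesis .
  qed
  then show ?thesis using assms by (simp add: vec_eq_iff)
qed

lemma transpose_spectral_matrix: "transpose (spectral_matrix B g) = spectral_matrix B g"
  by (simp add: spectral_matrix_def transpose_def vec_eq_iff mult.commute)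

lemma orthonormal_basis_of_inner_sum:
  assumes B: "orthonormal_basis_of B W" and "c \<in> B"
  shows "c \<bullet> (\<Sum>b\<in>B. f b *\<^sub>R b) = f c"
proof -
  have "c \<bullet> (\<Sum>b\<in>B. f b *\<^sub>R b) = (\<Sum>b\<in>B. f b * (c \<bullet> b))"
    by (simp add: inner_sum_right)
  also have "\<dots> = (\<Sum>b\<in>B. if b = c then f b else 0)"
    using B \<open>c \<in> B\<close> unfolding orthonormal_basis_of_def pairwise_def orthogonal_def
    by (intro sum.cong) (auto simp: norm_eq_1)
  finally show ?thesis using orthonormal_basis_of_finite[OF B] \<open>c \<in> B\<close> by simp
qed

lemma spectral_matrix_mult:
  assumes B: "orthonormal_basis_of B W"
  shows "spectral_matrix B g ** spectral_matrix B h = spectral_matrix B (\<lambda>b. g b * h b)"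
proof -
  have "finite B" using B by (rule orthonormal_basis_of_finite)
  have "(spectral_matrix B g ** spectral_matrix B h) *v x = spectral_matrix B (\<lambda>b. g b * h b) *v x" for x
    unfolding matrix_vector_mul_assoc[symmetric] spectral_matrix_mult_vec[OF \<open>finite B\<close>]
    by (intro sum.cong) (simp_all add: orthonormal_basis_of_inner_sum[OF B])
  then show ?thesis unfolding matrix_eq by blast
qed

lemma spectral_matrix_one:
  assumes B: "orthonormal_basis_of B UNIV" and "\<And>b. b \<in> B \<Longrightarrow> g b = 1"
  shows "spectral_matrix B g = mat 1"
proof -
  have "spectral_matrix B g *v x = mat 1 *v x" for x
  proof -
    have "spectral_matrix B g *v x = (\<Sum>b\<in>B. (b \<bullet> x) *\<^sub>R b)"
      using assms(2) by (simp add: spectral_matrix_mult_vec[OF orthonormal_basis_of_finite[OF B]])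
    also have "\<dots> = x" by (rule orthonormal_basis_of_expansion[OF B, symmetric]) simp
    finally show ?thesis by simp
  qed
  then show ?thesis unfolding matrix_eq by blast
qed

lemma symmetric_matrix_eq_spectral_matrix:
  fixes A :: "real^'n^'n"
  assumes sym: "transpose A = A" and B: "orthonormal_basis_of B UNIV"
    and eigen: "\<And>b. b \<in> B \<Longrightarrow> A *v b = (b \<bullet> (A *v b)) *\<^sub>R b"
  shows "A = spectral_matrix B (\<lambda>b. b \<bullet> (A *v b))"
proof -
  have "A *v x = spectral_matrix B (\<lambda>b. b \<bullet> (A *v b)) *v x" for x
  proof -
    have "A *v x = (\<Sum>b\<in>B. (b \<bullet> (A *v x)) *\<^sub>R b)" by (rule orthonormal_basis_of_expansion[OF B]) simp
    also have "\<dots> = (\<Sum>b\<in>B. ((b \<bullet> (A *v b)) * (b \<bullet> x)) *\<^sub>R b)"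
    proof (intro sum.cong refl)
      fix b assume "b \<in> B"
      have "b \<bullet> (A *v x) = (A *v b) \<bullet> x" by (rule symmetric_matrix_inner_commute[OF sym])
      also have "\<dots> = (b \<bullet> (A *v b)) * (b \<bullet> x)" by (subst eigen[OF \<open>b \<in> B\<close>]) simp
      finally show "(b \<bullet> (A *v x)) *\<^sub>R b = ((b \<bullet> (A *v b)) * (b \<bullet> x)) *\<^sub>R b" by simp
    qed
    also have "\<dots> = spectral_matrix B (\<lambda>b. b \<bullet> (A *v b)) *v x"
      using orthonormal_basis_of_finite[OF B] by (simp only: spectral_matrix_mult_vec)
    finally show ?thesis .
  qed
  then show ?thesis unfolding matrix_eq by blast
qed

lemma spectral_matrix_pos_def:
  assumes B: "orthonormal_basis_of B UNIV" and pos: "\<And>b. b \<in> B \<Longrightarrow> g b > 0"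
  shows "real_pos_def (spectral_matrix B g)"
  unfolding real_pos_def_def
proof (intro conjI allI impI transpose_spectral_matrix)
  fix x :: "real^'a" assume "x \<noteq> 0"
  have "finite B" using B by (rule orthonormal_basis_of_finite)
  have "\<exists>c\<in>B. c \<bullet> x \<noteq> 0"
  proof (rule ccontr)
    assume "\<not> (\<exists>c\<in>B. c \<bullet> x \<noteq> 0)"
    then have "(\<Sum>b\<in>B. (b \<bullet> x) *\<^sub>R b) = 0" by simp
    then have "x = 0" using orthonormal_basis_of_expansion[OF B UNIV_I] by (rule trans[rotated])
    with \<open>x \<noteq> 0\<close> show False by simp
  qed
  then obtain c where "c \<in> B" "c \<bullet> x \<noteq> 0" by blast
  then have "0 < g c * (c \<bullet> x)\<^sup>2" using pos by simp
  also have "\<dots> \<le> (\<Sum>b\<in>B. g b * (b \<bullet> x)\<^sup>2)"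
    using \<open>finite B\<close> \<open>c \<in> B\<close> less_imp_le[OF pos] by (intro member_le_sum) simp_all
  also have "\<dots> = x \<bullet> (spectral_matrix B g *v x)"
    using \<open>finite B\<close> by (simp add: spectral_matrix_mult_vec inner_sum_right power2_eq_square inner_commute mult_ac)
  finally show "x \<bullet> (spectral_matrix B g *v x) > 0" .
qed

lemma matrix_inv_eqI:
  fixes A :: "'a::semiring_1^'n^'m"
  assumes "A ** P = mat 1" "P ** A = mat 1"
  shows "matrix_inv A = P"
proof -
  have "A ** matrix_inv A = mat 1"
    unfolding matrix_inv_def using someI[of "\<lambda>P. A ** P = mat 1 \<and> P ** A = mat 1"] assms by blast
  then have "P ** (A ** matrix_inv A) = P" by simp
  then show ?thesis by (simp add: matrix_mul_assoc assms(2))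
qed

lemma pos_def_inverse_sqrt_exists:
  fixes A :: "real^'n^'n"
  assumes A: "real_pos_def A"
  shows "\<exists>S. real_pos_def S \<and> S ** S = matrix_inv A"
proof -
  have sym: "transpose A = A" using A unfolding real_pos_def_def by blast
  obtain B where B: "orthonormal_basis_of B UNIV" and eigen: "\<And>b. b \<in> B \<Longrightarrow> A *v b = (b \<bullet> (A *v b)) *\<^sub>R b"
    using symmetric_matrix_orthonormal_eigenbasis[OF sym subspace_UNIV] by blast
  define l where "l b = b \<bullet> (A *v b)" for b
  have l_pos: "l b > 0" if "b \<in> B" for b
  proof -
    have "b \<noteq> 0" using B that unfolding orthonormal_basis_of_def by auto
    then show ?thesis using A unfolding real_pos_def_def l_def by blast
  qed
  define S where "S = spectral_matrix B (\<lambda>b. 1 / sqrt (l b))"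
  have A_eq: "A = spectral_matrix B l"
    unfolding l_def using symmetric_matrix_eq_spectral_matrix[OF sym B eigen] .
  have "A ** (S ** S) = spectral_matrix B (\<lambda>b. l b * (1 / sqrt (l b) * (1 / sqrt (l b))))"
    "(S ** S) ** A = spectral_matrix B (\<lambda>b. 1 / sqrt (l b) * (1 / sqrt (l b)) * l b)"
    unfolding S_def A_eq spectral_matrix_mult[OF B] by simp_all
  moreover have "l b * (1 / sqrt (l b) * (1 / sqrt (l b))) = 1" "1 / sqrt (l b) * (1 / sqrt (l b)) * l b = 1"
    if "b \<in> B" for b
    using l_pos[OF that] by (simp_all add: field_simps)
  ultimately have "A ** (S ** S) = mat 1" "(S ** S) ** A = mat 1"
    using spectral_matrix_one[OF B] by simp_all
  then have "matrix_inv A = S ** S" by (rule matrix_inv_eqI)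
  moreover have "real_pos_def S" unfolding S_def using l_pos by (intro spectral_matrix_pos_def[OF B]) simp
  ultimately show ?thesis by metis
qed

lemma pos_def_sqrt_unique:
  fixes S R :: "real^'n^'n"
  assumes S: "real_pos_def S" and R: "real_pos_def R" and "S ** S = R ** R"
  shows "S = R"
proof -
  define X where "X = S - R"
  have "transpose X = X" using S R unfolding X_def real_pos_def_def by (simp add: transpose_def vec_eq_iff)
  then obtain B where B: "orthonormal_basis_of B UNIV" and eigen: "\<And>b. b \<in> B \<Longrightarrow> X *v b = (b \<bullet> (X *v b)) *\<^sub>R b"
    using symmetric_matrix_orthonormal_eigenbasis[OF _ subspace_UNIV] by blast
  \<comment> \<open>\<open>S X + X R = S\<^sup>2 - R\<^sup>2 = 0\<close>, and an eigenvalue \<open>\<mu>\<close> of \<open>X\<close> at \<open>b\<close> gives \<open>\<mu> (b\<bullet>Sb + b\<bullet>Rb) = 0\<close>.\<close>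
  have "b \<bullet> (X *v b) = 0" if "b \<in> B" for b
  proof -
    define \<mu> where "\<mu> = b \<bullet> (X *v b)"
    have Xb: "X *v b = \<mu> *\<^sub>R b" unfolding \<mu>_def by (rule eigen[OF that])
    have "b \<noteq> 0" using B that unfolding orthonormal_basis_of_def by auto
    then have pos: "0 < b \<bullet> (S *v b) + b \<bullet> (R *v b)"
      using S R unfolding real_pos_def_def by (simp add: add_pos_pos)
    have "S *v (S *v b) = R *v (R *v b)"
      using \<open>S ** S = R ** R\<close> by (simp add: matrix_vector_mul_assoc)
    then have "S *v (X *v b) + X *v (R *v b) = 0"
      unfolding X_def by (simp add: matrix_vector_mult_diff_rdistrib matrix_vector_mult_diff_distrib)
    then have "0 = b \<bullet> (S *v (X *v b)) + b \<bullet> (X *v (R *v b))"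
      by (metis inner_add_right inner_zero_right)
    also have "\<dots> = b \<bullet> (S *v (X *v b)) + (X *v b) \<bullet> (R *v b)"
      by (subst symmetric_matrix_inner_commute[OF \<open>transpose X = X\<close>]) (rule refl)
    also have "\<dots> = \<mu> * (b \<bullet> (S *v b) + b \<bullet> (R *v b))"
      unfolding Xb by (simp add: matrix_vector_mult_scaleR algebra_simps)
    finally show ?thesis using pos unfolding \<mu>_def by simp
  qed
  then have "spectral_matrix B (\<lambda>b. b \<bullet> (X *v b)) = 0" by (simp add: spectral_matrix_def)
  then have "X = 0" using symmetric_matrix_eq_spectral_matrix[OF \<open>transpose X = X\<close> B eigen] by (rule trans[rotated])
  then show ?thesis unfolding X_def by simp
qed

lemma mat_inv_sqrt_correct:
  fixes A :: "real^'n^'n"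
  assumes "real_pos_def A"
  shows "real_pos_def (mat_inv_sqrt A) \<and> mat_inv_sqrt A ** mat_inv_sqrt A = matrix_inv A"
proof -
  obtain S where S: "real_pos_def S" "S ** S = matrix_inv A"
    using pos_def_inverse_sqrt_exists[OF assms] by blast
  have "\<exists>!S. real_pos_def S \<and> S ** S = matrix_inv A"
  proof (rule ex1I[of _ S])
    fix S' assume "real_pos_def S' \<and> S' ** S' = matrix_inv A"
    then show "S' = S" using S by (auto intro: pos_def_sqrt_unique[of S' S])
  qed (use S in blast)
  then show ?thesis unfolding mat_inv_sqrt_def by (rule theI')
qed

definition cinner :: "complex^'n \<Rightarrow> complex^'n \<Rightarrow> complex" where
  "cinner a b = (\<Sum>i\<in>UNIV. cnj (a $ i) * b $ i)"

lemma cinner_cadj: "cinner x (A *v y) = cinner (cadj A *v x) y"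
proof -
  have "cinner x (A *v y) = (\<Sum>i\<in>UNIV. \<Sum>j\<in>UNIV. cnj (x $ i) * A $ i $ j * y $ j)"
    by (simp add: cinner_def matrix_vector_mult_def sum_distrib_left mult.assoc)
  also have "\<dots> = (\<Sum>j\<in>UNIV. \<Sum>i\<in>UNIV. cnj (x $ i) * A $ i $ j * y $ j)" by (rule sum.swap)
  also have "\<dots> = cinner (cadj A *v x) y"
    by (simp add: cinner_def matrix_vector_mult_def cadj_def sum_distrib_right sum_distrib_left mult_ac)
  finally show ?thesis .
qed

lemma cinner_sum_left: "cinner (\<Sum>u\<in>U. f u) b = (\<Sum>u\<in>U. cinner (f u) b)"
  by (simp add: cinner_def sum_distrib_right sum.swap[of _ UNIV U] cong: sum.cong)

lemma cinner_sum_right: "cinner a (\<Sum>u\<in>U. f u) = (\<Sum>u\<in>U. cinner a (f u))"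
  by (simp add: cinner_def sum_distrib_left sum.swap[of _ UNIV U] cong: sum.cong)

lemma cinner_zero_right [simp]: "cinner a 0 = 0"
  by (simp add: cinner_def)

lemma cinner_diff_right: "cinner a (b - c) = cinner a b - cinner a c"
  by (simp add: cinner_def right_diff_distrib sum_subtractf)

lemma cinner_scale_right: "cinner a (c *s b) = c * cinner a b"
  by (simp add: cinner_def sum_distrib_left mult_ac)

lemma cinner_self: "cinner w w = of_real ((norm w)\<^sup>2)"
proof -
  have "(norm w)\<^sup>2 = (\<Sum>i\<in>UNIV. (cmod (w $ i))\<^sup>2)"
    unfolding norm_vec_def L2_set_def by (simp add: sum_nonneg)
  then have "of_real ((norm w)\<^sup>2) = (\<Sum>i\<in>UNIV. of_real ((cmod (w $ i))\<^sup>2) :: complex)" by simp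
  also have "\<dots> = cinner w w" unfolding cinner_def
    by (rule sum.cong) (simp_all add: complex_norm_square mult.commute del: of_real_power)
  finally show ?thesis by simp
qed

lemma cadj_cadj [simp]: "cadj (cadj A) = A"
  by (simp add: cadj_def vec_eq_iff)

lemma cadj_zero [simp]: "cadj 0 = 0"
  by (simp add: cadj_def vec_eq_iff)

lemma cadj_diff: "cadj (A - B) = cadj A - cadj B"
  by (simp add: cadj_def vec_eq_iff)

lemma cadj_sum: "cadj (\<Sum>e\<in>E. M e) = (\<Sum>e\<in>E. cadj (M e))"
  by (induct E rule: infinite_finite_induct) (simp_all add: cadj_def vec_eq_iff)

lemma cadj_scaled: "cadj (\<chi> i j. c * P $ i $ j) = (\<chi> i j. cnj c * cadj P $ i $ j)"
  by (simp add: cadj_def vec_eq_iff)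

lemma cadj_matrix_mult: "cadj (A ** B) = cadj B ** cadj A"
  by (simp add: cadj_def vec_eq_iff matrix_matrix_mult_def mult.commute)

lemma cmat_sum: "cmat (\<Sum>e\<in>E. M e) = (\<Sum>e\<in>E. cmat (M e))"
  by (induct E rule: infinite_finite_induct) (simp_all add: cmat_def vec_eq_iff)

lemma cmat_matrix_mult: "cmat (A ** B) = cmat A ** cmat B"
  by (simp add: cmat_def vec_eq_iff matrix_matrix_mult_def)

lemma cmat_transpose: "cmat (transpose A) = cadj (cmat A)"
  by (simp add: cmat_def cadj_def vec_eq_iff transpose_def)

lemma sum_matrix_vector_mult: "(\<Sum>e\<in>E. M e) *v (w :: 'a::comm_ring_1^'n) = (\<Sum>e\<in>E. M e *v w)"
  by (induct E rule: infinite_finite_induct) (simp_all add: matrix_vector_mult_add_rdistrib)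

lemma scaled_matrix_vector_mult: "(\<chi> i j. c * P $ i $ j) *v w = c *s (P *v w)"
  by (simp add: vec_eq_iff matrix_vector_mult_def sum_distrib_left mult.assoc)

lemma norm_unimodular_scalar_mult:
  fixes w :: "complex^'n"
  assumes "cmod s = 1"
  shows "norm (s *s w) = norm w"
  unfolding norm_vec_def L2_set_def by (simp add: norm_mult assms)

lemma block_psd_congruence:
  assumes M: "block_psd n M"
    and N: "\<And>u v. u < n \<Longrightarrow> v < n \<Longrightarrow> N u v = cadj (C u) ** M u v ** C v"
  shows "block_psd n N"
  unfolding block_psd_def
proof (intro conjI allI impI)
  fix u v assume "u < n" "v < n"
  then have "M u v = cadj (M v u)" using M unfolding block_psd_def by blast
  then show "N u v = cadj (N v u)"
    unfolding N[OF \<open>u < n\<close> \<open>v < n\<close>] N[OF \<open>v < n\<close> \<open>u < n\<close>]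
    by (simp add: cadj_matrix_mult matrix_mul_assoc)
next
  fix x :: "nat \<Rightarrow> complex^'a"
  define y where "y u = C u *v x u" for u
  have "(\<Sum>u<n. \<Sum>v<n. \<Sum>i\<in>UNIV. cnj (x u $ i) * (N u v *v x v) $ i)
      = (\<Sum>u<n. \<Sum>v<n. \<Sum>i\<in>UNIV. cnj (y u $ i) * (M u v *v y v) $ i)"
  proof (rule sum.cong[OF refl], rule sum.cong[OF refl])
    fix u v assume "u \<in> {..<n}" "v \<in> {..<n}"
    then have "cinner (x u) (N u v *v x v) = cinner (y u) (M u v *v y v)"
      by (simp add: N cinner_cadj y_def matrix_vector_mul_assoc[symmetric])
    then show "(\<Sum>i\<in>UNIV. cnj (x u $ i) * (N u v *v x v) $ i) = (\<Sum>i\<in>UNIV. cnj (y u $ i) * (M u v *v y v) $ i)"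
      unfolding cinner_def .
  qed
  moreover have "let Q = \<Sum>u<n. \<Sum>v<n. \<Sum>i\<in>UNIV. cnj (y u $ i) * (M u v *v y v) $ i in Im Q = 0 \<and> 0 \<le> Re Q"
    using M unfolding block_psd_def by blast
  ultimately show "let Q = \<Sum>u<n. \<Sum>v<n. \<Sum>i\<in>UNIV. cnj (x u $ i) * (N u v *v x v) $ i in Im Q = 0 \<and> 0 \<le> Re Q"
    by simp
qed

lemma norm_charge_scalar: "u \<in> hedge T H e \<Longrightarrow> cmod (charge_scalar q T H u e) = 1"
  unfolding charge_scalar_def hedge_def by (auto simp: norm_exp_eq_Re)

lemma norm_dir_restr_mult_vec:
  assumes "u \<in> hedge T H e"
  shows "norm (dir_restr q T H F u e *v a) = norm (cmat (F u e) *v a)"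
  using assms unfolding dir_restr_def
  by (simp add: scaled_matrix_vector_mult norm_unimodular_scalar_mult norm_charge_scalar)

lemma transpose_deg_mat: "transpose (deg_mat m T H F u) = deg_mat m T H F u"
  by (simp add: deg_mat_def transpose_def vec_eq_iff matrix_matrix_mult_def mult.commute)

lemma dir_hypergraph_hedge_subset:
  assumes "dir_hypergraph n m T H" and "e < m"
  shows "hedge T H e \<subseteq> {..<n}"
  using assms unfolding dir_hypergraph_def hedge_def by auto

lemma sheaf_laplacian_hermitian: "cadj (sheaf_laplacian m q T H F v u) = sheaf_laplacian m q T H F u v"
proof -
  have "cnj (1 / of_nat k :: complex) = 1 / of_nat k" for k by simp
  moreover have "cadj (if v = u then cmat (deg_mat m T H F v) else 0) = (if u = v then cmat (deg_mat m T H F u) else 0)"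
    by (simp add: cmat_transpose[symmetric] transpose_deg_mat)
  ultimately show ?thesis
    unfolding sheaf_laplacian_def cadj_diff cadj_sum cadj_scaled cadj_matrix_mult cadj_cadj by simp
qed

lemma cinner_sheaf_laplacian:
  "cinner a (sheaf_laplacian m q T H F u v *v b) =
     (if u = v then cinner a (cmat (deg_mat m T H F u) *v b) else 0)
     - (\<Sum>e<m. (1 / of_nat (hdelta T H e)) * cinner (dir_restr q T H F u e *v a) (dir_restr q T H F v e *v b))"
  unfolding sheaf_laplacian_def matrix_vector_mult_diff_rdistrib sum_matrix_vector_mult
    scaled_matrix_vector_mult matrix_vector_mul_assoc[symmetric] cinner_diff_right cinner_sum_right
    cinner_scale_right cinner_cadj[of a "cadj _"] cadj_cadj
  by simp

lemma sum_cinner_deg_mat: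
  assumes G: "dir_hypergraph n m T H"
  shows "(\<Sum>u<n. cinner (y u) (cmat (deg_mat m T H F u) *v y u))
    = of_real (\<Sum>e<m. \<Sum>u\<in>hedge T H e. (norm (cmat (F u e) *v y u))\<^sup>2)"
proof -
  let ?f = "\<lambda>u e. (norm (cmat (F u e) *v y u))\<^sup>2"
  have "cinner (y u) (cmat (deg_mat m T H F u) *v y u) = of_real (\<Sum>e\<in>{e \<in> {..<m}. u \<in> hedge T H e}. ?f u e)"
    for u
  proof -
    have "cmat (deg_mat m T H F u) *v y u
        = (\<Sum>e\<in>{e \<in> {..<m}. u \<in> hedge T H e}. cadj (cmat (F u e)) *v (cmat (F u e) *v y u))"
      unfolding deg_mat_def cmat_sum cmat_matrix_mult cmat_transpose sum_matrix_vector_mult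
        matrix_vector_mul_assoc by (simp add: lessThan_def)
    then show ?thesis by (simp add: cinner_sum_right cinner_cadj[of "y u" "cadj _"] cinner_self)
  qed
  then have "(\<Sum>u<n. cinner (y u) (cmat (deg_mat m T H F u) *v y u))
      = of_real (\<Sum>u<n. \<Sum>e\<in>{e \<in> {..<m}. u \<in> hedge T H e}. ?f u e)"
    by (simp only: of_real_sum)
  also have "(\<Sum>u<n. \<Sum>e\<in>{e \<in> {..<m}. u \<in> hedge T H e}. ?f u e)
      = (\<Sum>e<m. \<Sum>u\<in>{u \<in> {..<n}. u \<in> hedge T H e}. ?f u e)"
    by (rule sum.swap_restrict) simp_all
  also have "\<dots> = (\<Sum>e<m. \<Sum>u\<in>hedge T H e. ?f u e)"
    using dir_hypergraph_hedge_subset[OF G] by (intro sum.cong refl arg_cong2[where f = sum]) auto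
  finally show ?thesis .
qed

lemma sum_cinner_dir_restr:
  assumes G: "dir_hypergraph n m T H"
  shows "(\<Sum>u<n. \<Sum>v<n. \<Sum>e<m. c e * cinner (dir_restr q T H F u e *v y u) (dir_restr q T H F v e *v y v))
    = (\<Sum>e<m. c e * of_real ((norm (\<Sum>u\<in>hedge T H e. dir_restr q T H F u e *v y u))\<^sup>2))"
proof -
  have "(\<Sum>u<n. dir_restr q T H F u e *v y u) = (\<Sum>u\<in>hedge T H e. dir_restr q T H F u e *v y u)"
    if "e < m" for e
    using dir_hypergraph_hedge_subset[OF G that]
    by (intro sum.mono_neutral_right) (auto simp: dir_restr_def)
  then show ?thesis
    by (simp add: sum.swap[of _ "{..<m}"] sum_distrib_left[symmetric] cinner_sum_left[symmetric]
        cinner_sum_right[symmetric] cinner_self)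
qed

lemma sheaf_laplacian_quadratic_form:
  assumes G: "dir_hypergraph n m T H"
  shows "(\<Sum>u<n. \<Sum>v<n. cinner (y u) (sheaf_laplacian m q T H F u v *v y v))
    = of_real (\<Sum>e<m. (\<Sum>u\<in>hedge T H e. (norm (cmat (F u e) *v y u))\<^sup>2)
        - (norm (\<Sum>u\<in>hedge T H e. dir_restr q T H F u e *v y u))\<^sup>2 / real (hdelta T H e))"
proof -
  have "(\<Sum>u<n. \<Sum>v<n. cinner (y u) (sheaf_laplacian m q T H F u v *v y v))
      = (\<Sum>u<n. cinner (y u) (cmat (deg_mat m T H F u) *v y u))
        - (\<Sum>u<n. \<Sum>v<n. \<Sum>e<m. (1 / of_nat (hdelta T H e))
            * cinner (dir_restr q T H F u e *v y u) (dir_restr q T H F v e *v y v))"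
    unfolding cinner_sheaf_laplacian sum_subtractf by (simp add: sum.delta)
  then show ?thesis
    unfolding sum_cinner_deg_mat[OF G] sum_cinner_dir_restr[OF G]
    by (simp add: sum_subtractf)
qed

lemma norm_sum_dir_restr_le:
  "(norm (\<Sum>u\<in>hedge T H e. dir_restr q T H F u e *v y u))\<^sup>2
    \<le> real (hdelta T H e) * (\<Sum>u\<in>hedge T H e. (norm (cmat (F u e) *v y u))\<^sup>2)"
proof -
  let ?a = "\<lambda>u. norm (cmat (F u e) *v y u)"
  have "norm (\<Sum>u\<in>hedge T H e. dir_restr q T H F u e *v y u)
      \<le> (\<Sum>u\<in>hedge T H e. norm (dir_restr q T H F u e *v y u))"
    by (rule norm_sum)
  also have "\<dots> = (\<Sum>u\<in>hedge T H e. ?a u)"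
    by (intro sum.cong refl) (rule norm_dir_restr_mult_vec)
  finally have "(norm (\<Sum>u\<in>hedge T H e. dir_restr q T H F u e *v y u))\<^sup>2 \<le> (\<Sum>u\<in>hedge T H e. ?a u)\<^sup>2"
    by (simp add: power_mono)
  also have "\<dots> \<le> (\<Sum>u\<in>hedge T H e. (?a u)\<^sup>2) * card (hedge T H e)"
    by (rule sum_squared_le_sum_of_squares)
  finally show ?thesis by (simp add: hdelta_def mult.commute)
qed

lemma sheaf_laplacian_block_psd:
  assumes "dir_hypergraph n m T H"
  shows "block_psd n (sheaf_laplacian m q T H F)"
  unfolding block_psd_def
proof (intro conjI allI impI)
  fix u v show "sheaf_laplacian m q T H F u v = cadj (sheaf_laplacian m q T H F v u)"
    by (simp add: sheaf_laplacian_hermitian)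
next
  fix x :: "nat \<Rightarrow> complex^'a"
  \<comment> \<open>If \<open>hdelta T H e = 0\<close> the division yields 0, so empty hyperedges need no special care.\<close>
  have "0 \<le> (\<Sum>u\<in>hedge T H e. (norm (cmat (F u e) *v x u))\<^sup>2)
      - (norm (\<Sum>u\<in>hedge T H e. dir_restr q T H F u e *v x u))\<^sup>2 / real (hdelta T H e)" for e
    using norm_sum_dir_restr_le[where y = x]
    by (cases "hdelta T H e = 0") (auto simp: field_simps sum_nonneg)
  then show "let Q = \<Sum>u<n. \<Sum>v<n. \<Sum>i\<in>UNIV. cnj (x u $ i) * (sheaf_laplacian m q T H F u v *v x v) $ i
    in Im Q = 0 \<and> 0 \<le> Re Q"
    using sheaf_laplacian_quadratic_form[OF assms, where y = x]
    unfolding cinner_def Let_def by (simp add: sum_nonneg)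
qed

theorem corollary1:
  fixes n m :: nat and q :: real
    and T H :: "nat \<Rightarrow> nat set"
    and F :: "nat \<Rightarrow> nat \<Rightarrow> real^'d^'d"
  assumes "dir_hypergraph n m T H"
    and "\<forall>u<n. real_pos_def (deg_mat m T H F u)"
  shows "block_psd n (norm_sheaf_laplacian m q T H F)"
proof (rule block_psd_congruence[OF sheaf_laplacian_block_psd[OF assms(1)]])
  let ?S = "\<lambda>u. cmat (mat_inv_sqrt (deg_mat m T H F u))"
  have self_adjoint: "cadj (?S u) = ?S u" if "u < n" for u
    using mat_inv_sqrt_correct[OF assms(2)[rule_format, OF that]]
    unfolding real_pos_def_def by (simp add: cmat_transpose[symmetric])
  fix u v assume "u < n" "v < n"
  then show "norm_sheaf_laplacian m q T H F u v = cadj (?S u) ** sheaf_laplacian m q T H F u v ** ?S v"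
    using self_adjoint by (simp add: norm_sheaf_laplacian_def)
qed

end
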